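(* Let $(t_i)_{i\in\mathbb{N}}$ be a sequence of real numbers that are algebraically independent over $\mathbb{Q}$, and let $A=\{P_{i,j} : i,j\in\mathbb{N},\ i<j\}\subseteq\mathbb{R}^2$, where $P_{i,j} = (t_i + t_j,\ t_i^2 + t_it_j + t_j^2)$. Then for no positive integer $m$ can $A$ be partitioned as $A=A_1\cup\cdots\cup A_m$ with each $A_r$ containing no three collinear points. *)

theory Defs
  imports "HOL-Analysis.Analysis"
begin

text \<open>A monomial in countably many variables is an exponent vector with finite support;
  its value at the point t is the product of the powers t i ^ alpha i.\<close>
definition monomial_val :: "(nat \<Rightarrow> real) \<Rightarrow> (nat \<Rightarrow> nat) \<Rightarrow> real" where
  "monomial_val t \<alpha> = (\<Prod>i\<in>{i. \<alpha> i \<noteq> 0}. t i ^ \<alpha> i)"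

text \<open>Algebraic independence over Q: no nonzero polynomial with rational coefficients
  (a finite rational linear combination of distinct monomials) vanishes at t.\<close>
definition alg_indep_over_rat :: "(nat \<Rightarrow> real) \<Rightarrow> bool" where
  "alg_indep_over_rat t \<longleftrightarrow>
     (\<forall>M c. finite M \<and> (\<forall>\<alpha>\<in>M. finite {i. \<alpha> i \<noteq> 0}) \<and>
        (\<Sum>\<alpha>\<in>M. of_rat (c \<alpha>) * monomial_val t \<alpha>) = 0
        \<longrightarrow> (\<forall>\<alpha>\<in>M. c \<alpha> = 0))"

definition no_three_collinear :: "(real \<times> real) set \<Rightarrow> bool" where
  "no_three_collinear S \<longleftrightarrow>
     (\<forall>p\<in>S. \<forall>q\<in>S. \<forall>r\<in>S. p \<noteq> q \<and> p \<noteq> r \<and> q \<noteq> r \<longrightarrow> \<not> collinear {p, q, r})"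

definition Ppt :: "(nat \<Rightarrow> real) \<Rightarrow> nat \<Rightarrow> nat \<Rightarrow> real \<times> real" where
  "Ppt t i j = (t i + t j, (t i)^2 + t i * t j + (t j)^2)"

end

theory Submission
  imports Defs "HOL-Library.Ramsey"
begin

text \<open>The three points P(a,b), P(a,c), P(b,c) lie on one line, and by algebraic independence
  they are pairwise distinct. Colouring each pair {i,j} by a part containing P(i,j), Ramsey's
  theorem yields a monochromatic triangle {a,b,c}, i.e. three collinear points in one part.\<close>

lemma infinite_obtain_three:
  assumes "infinite Y"
  obtains a b c where "a \<in> Y" "b \<in> Y" "c \<in> Y" "a \<noteq> b" "a \<noteq> c" "b \<noteq> c"
proof -
  obtain S where "finite S" "card S = 3" "S \<subseteq> Y"
    using infinite_arbitrarily_large[OF assms] by blast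
  then show thesis
    using that by (auto simp: card_3_iff)
qed

lemma Ramsey_monochromatic_triangle:
  fixes n :: nat
  assumes "infinite Z"
    and coloured: "\<And>x y. x \<in> Z \<Longrightarrow> y \<in> Z \<Longrightarrow> x \<noteq> y \<Longrightarrow> \<exists>r<n. P r x y"
    and sym: "\<And>r x y. P r x y \<Longrightarrow> P r y x"
  obtains r a b c where "r < n" "a \<in> Z" "b \<in> Z" "c \<in> Z" "a \<noteq> b" "a \<noteq> c" "b \<noteq> c"
    "P r a b" "P r a c" "P r b c"
proof -
  define f where "f S = (SOME r. r < n \<and> (\<forall>x\<in>S. \<forall>y\<in>S. x \<noteq> y \<longrightarrow> P r x y))" for S
  have f: "f {x, y} < n \<and> P (f {x, y}) x y"
    if xy: "x \<in> Z" "y \<in> Z" "x \<noteq> y" for x y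
  proof -
    obtain r where "r < n" "P r x y"
      using coloured xy by blast
    then have "r < n \<and> (\<forall>u\<in>{x, y}. \<forall>v\<in>{x, y}. u \<noteq> v \<longrightarrow> P r u v)"
      using sym by blast
    then have "f {x, y} < n \<and> (\<forall>u\<in>{x, y}. \<forall>v\<in>{x, y}. u \<noteq> v \<longrightarrow> P (f {x, y}) u v)"
      unfolding f_def by (rule someI)
    then show ?thesis
      using xy(3) by blast
  qed
  obtain Y r where Y: "Y \<subseteq> Z" "infinite Y" "r < n"
    and monochromatic: "\<forall>x\<in>Y. \<forall>y\<in>Y. x \<noteq> y \<longrightarrow> f {x, y} = r"
    using Ramsey2[OF assms(1), of f n] f by blast
  have P_Y: "P r x y" if "x \<in> Y" "y \<in> Y" "x \<noteq> y" for x y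
    using f[of x y] monochromatic that Y(1) by auto
  obtain a b c where "a \<in> Y" "b \<in> Y" "c \<in> Y" "a \<noteq> b" "a \<noteq> c" "b \<noteq> c"
    using infinite_obtain_three[OF \<open>infinite Y\<close>] .
  then show thesis
    using Y(1,3) P_Y by (intro that[of r a b c]) auto
qed

lemma monomial_val_indicator_singleton: "monomial_val t (indicator {i}) = t i"
proof -
  have "{k. (indicator {i} k :: nat) \<noteq> 0} = {i}"
    by (auto simp: indicator_def)
  then show ?thesis
    by (simp add: monomial_val_def)
qed

lemma alg_indep_over_rat_imp_inj:
  assumes "alg_indep_over_rat t"
  shows "inj t"
proof (rule injI, rule ccontr)
  fix i j
  assume "t i = t j" "i \<noteq> j"
  define M where "M = {indicator {i}, indicator {j} :: nat \<Rightarrow> nat}"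
  define c where "c \<alpha> = (if \<alpha> = indicator {i} then 1 else - 1 :: rat)" for \<alpha> :: "nat \<Rightarrow> nat"
  have "(indicator {i} :: nat \<Rightarrow> nat) j \<noteq> indicator {j} j"
    using \<open>i \<noteq> j\<close> by simp
  then have distinct: "indicator {i} \<noteq> (indicator {j} :: nat \<Rightarrow> nat)"
    by auto
  have "(\<Sum>\<alpha>\<in>M. of_rat (c \<alpha>) * monomial_val t \<alpha>) = 0"
    using distinct \<open>t i = t j\<close> by (simp add: M_def c_def monomial_val_indicator_singleton)
  moreover have "finite M" "\<forall>\<alpha>\<in>M. finite {k. \<alpha> k \<noteq> 0}"
    by (auto simp: M_def indicator_def)
  ultimately have "\<forall>\<alpha>\<in>M. c \<alpha> = 0"
    using assms unfolding alg_indep_over_rat_def by blast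
  then show False
    by (simp add: M_def c_def)
qed

lemma Ppt_commute: "Ppt t i j = Ppt t j i"
  by (simp add: Ppt_def algebra_simps)

text \<open>All three points lie on the line y = s x - e, where s = t a + t b + t c and
  e = t a t b + t b t c + t c t a.\<close>

lemma collinear_Ppt_triangle: "collinear {Ppt t a b, Ppt t a c, Ppt t b c}"
proof -
  define u :: "real \<times> real" where "u = (0, - (t a * t b + t b * t c + t c * t a))"
  define v :: "real \<times> real" where "v = (1, t a + t b + t c)"
  have "Ppt t a b = u + (t a + t b) *\<^sub>R v" "Ppt t a c = u + (t a + t c) *\<^sub>R v"
    "Ppt t b c = u + (t b + t c) *\<^sub>R v"
    by (auto simp: Ppt_def u_def v_def prod_eq_iff algebra_simps power2_eq_square)
  then show ?thesis
    unfolding collinear_alt by (intro exI[of _ u] exI[of _ v]) auto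
qed

theorem mainTheorem4:
  fixes t :: "nat \<Rightarrow> real"
  assumes "alg_indep_over_rat t"
  shows "\<not> (\<exists>m::nat. m > 0 \<and> (\<exists>B :: nat \<Rightarrow> (real \<times> real) set.
            (\<Union>r<m. B r) = {Ppt t i j | i j. i < j} \<and> (\<forall>r<m. no_three_collinear (B r))))"
proof
  assume "\<exists>m::nat. m > 0 \<and> (\<exists>B :: nat \<Rightarrow> (real \<times> real) set.
            (\<Union>r<m. B r) = {Ppt t i j | i j. i < j} \<and> (\<forall>r<m. no_three_collinear (B r)))"
  then obtain m :: nat and B where cover: "(\<Union>r<m. B r) = {Ppt t i j | i j. i < j}"
    and parts: "\<forall>r<m. no_three_collinear (B r)"
    by blast
  have coloured: "\<exists>r<m. Ppt t i j \<in> B r" if "i \<noteq> j" for i j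
  proof -
    have "Ppt t i j \<in> {Ppt t i j | i j. i < j}"
      using that by (cases "i < j") (use Ppt_commute nat_neq_iff in blast)+
    then show ?thesis
      using cover by blast
  qed
  obtain r a b c where "r < m" "a \<noteq> b" "a \<noteq> c" "b \<noteq> c"
    and in_part: "Ppt t a b \<in> B r" "Ppt t a c \<in> B r" "Ppt t b c \<in> B r"
    by (rule Ramsey_monochromatic_triangle[OF infinite_UNIV_nat, of m "\<lambda>r x y. Ppt t x y \<in> B r"])
      (auto simp: coloured Ppt_commute)
  then have "t a \<noteq> t b" "t a \<noteq> t c" "t b \<noteq> t c"
    using alg_indep_over_rat_imp_inj[OF assms] by (auto simp: inj_eq)
  then have "Ppt t a b \<noteq> Ppt t a c" "Ppt t a b \<noteq> Ppt t b c" "Ppt t a c \<noteq> Ppt t b c"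
    by (auto simp: Ppt_def)
  moreover have "no_three_collinear (B r)"
    using parts \<open>r < m\<close> by blast
  ultimately have "\<not> collinear {Ppt t a b, Ppt t a c, Ppt t b c}"
    using in_part unfolding no_three_collinear_def by blast
  then show False
    using collinear_Ppt_triangle by blast
qed

end
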